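(* Let $k \ge 1$, $r \ge 0$ and $m \in [0,k]$ be integers, let $\mathcal{P} \subseteq \mathcal{X}$ be a finite point set, and let $\mathcal{U}, \mathcal{V} \subseteq \mathcal{X}$ be sets of centers with $|\mathcal{U}| = k$ and $|\mathcal{V}| = k + r$. If the number of well-separated pairs with respect to $(\mathcal{U},\mathcal{V})$ is $k - m$, then there exists a subset $\tilde{\mathcal{U}} \subseteq \mathcal{U}$ of size at most $k - \lfloor (m-r)/4 \rfloor$ such that $\mathrm{cost}(\tilde{\mathcal{U}}, \mathcal{P}) \le 6\gamma \cdot \bigl(\mathrm{cost}(\mathcal{U},\mathcal{P}) + \mathrm{cost}(\mathcal{V},\mathcal{P})\bigr)$.
   Context: $(\mathcal{X}, d)$ is a metric space. For $\mathcal{W} \subseteq \mathcal{X}$ and $p \in \mathcal{X}$, $d(p,\mathcal{W}) = \min_{q \in \mathcal{W}} d(p,q)$, and $\mathrm{cost}(\mathcal{W},\mathcal{P}) = \sum_{p \in \mathcal{P}} d(p,\mathcal{W})$. The constant $\gamma$ equals $4000$. For $\mathcal{U},\mathcal{V} \subseteq \mathcal{X}$, a pair $(u,v) \in \mathcal{U} \times \mathcal{V}$ is well-separated with respect to $(\mathcal{U},\mathcal{V})$ if $d(u, \mathcal{U} \setminus \{u\}) \ge \gamma \cdot d(u,v)$ and $d(v, \mathcal{V} \setminus \{v\}) \ge \gamma \cdot d(u,v)$. *)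

theory Defs
  imports "HOL-Analysis.Analysis"
begin

definition gamma :: real where "gamma = 4000"

definition dist_set :: "'a::metric_space \<Rightarrow> 'a set \<Rightarrow> real" where
  "dist_set p W = Min ((\<lambda>q. dist p q) ` W)"

definition cost :: "'a::metric_space set \<Rightarrow> 'a set \<Rightarrow> real" where
  "cost W P = (\<Sum>p\<in>P. dist_set p W)"

text \<open>The condition d(u, U - {u}) >= gamma * d(u,v) is written
  as a statement about every other element of U (so it holds vacuously when
  U - {u} is empty, i.e. distance to the empty set is +infinity).\<close>
definition well_separated :: "'a::metric_space set \<Rightarrow> 'a set \<Rightarrow> 'a \<Rightarrow> 'a \<Rightarrow> bool" where
  "well_separated U V u v \<longleftrightarrow> u \<in> U \<and> v \<in> V \<and>
     (\<forall>u'\<in>U - {u}. dist u u' \<ge> gamma * dist u v) \<and>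
     (\<forall>v'\<in>V - {v}. dist v v' \<ge> gamma * dist u v)"

definition num_well_separated :: "'a::metric_space set \<Rightarrow> 'a set \<Rightarrow> nat" where
  "num_well_separated U V = card {(u, v). u \<in> U \<and> v \<in> V \<and> well_separated U V u v}"

end

theory Submission
  imports Defs
begin

text \<open>Write \<open>\<delta> u = d(u, V)\<close>. Processing the centres of \<open>U\<close> by increasing \<open>\<delta>\<close>, greedily
  extract a set \<open>S \<subseteq> U\<close> whose members are pairwise farther apart than
  \<open>2(\<gamma>+1) max(\<delta> s, \<delta> t)\<close> while every \<open>u \<in> U\<close> lies within \<open>2(\<gamma>+1) \<delta> u\<close> of \<open>S\<close>.
  Since \<open>\<delta> u \<le> d(p,U) + d(p,V)\<close> for the centre \<open>u\<close> of \<open>U\<close> nearest to \<open>p\<close>, serving \<open>p\<close>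
  through \<open>u\<close> by \<open>S\<close> costs at most \<open>(2\<gamma>+3)(d(p,U) + d(p,V))\<close>.

  For the size of \<open>S\<close>, pair each \<open>s \<in> S\<close> with its nearest neighbour in \<open>V\<close>. Either the
  pair is well separated, or some other centre of \<open>U\<close> lies within \<open>\<gamma> \<delta> s\<close> of \<open>s\<close>, or
  some other centre of \<open>V\<close> lies within \<open>\<gamma> \<delta> s\<close> of the neighbour. Any two members of \<open>S\<close>
  that come within \<open>(\<gamma>+1)(\<delta> s + \<delta> t)\<close> of a common point coincide, so these witnesses
  are charged injectively to \<open>U - S\<close> and to the centres of \<open>V\<close> that are not nearest
  neighbours of \<open>S\<close>. Hence \<open>|S| \<le> (k - m) + (k - |S|) + (k + r - |S|)\<close>, that is
  \<open>|S| \<le> k - (m - r)/3\<close>.\<close>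

lemma exists_weighted_net:
  fixes T :: "'a::metric_space set" and f :: "'a \<Rightarrow> real"
  assumes "finite T" and "K \<ge> 0" and "\<And>t. t \<in> T \<Longrightarrow> f t \<ge> 0"
  shows "\<exists>S\<subseteq>T. pairwise (\<lambda>s t. K * max (f s) (f t) < dist s t) S \<and>
           (\<forall>t\<in>T. \<exists>s\<in>S. dist t s \<le> K * f t)"
  using assms(1,3)
proof (induction T rule: finite_ranking_induct[where f = f])
  case empty
  then show ?case by simp
next
  case (insert x T)
  then obtain S where S: "S \<subseteq> T" "pairwise (\<lambda>s t. K * max (f s) (f t) < dist s t) S"
    and cover: "\<forall>t\<in>T. \<exists>s\<in>S. dist t s \<le> K * f t"
    by auto
  show ?case
  proof (cases "\<exists>s\<in>S. dist x s \<le> K * f x")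
    case True
    with S cover show ?thesis by blast
  next
    case False
    \<comment> \<open>\<open>x\<close> carries the largest weight so far, so the new distances only need to beat \<open>K * f x\<close>.\<close>
    have "max (f s) (f x) = f x" if "s \<in> S" for s
      using that S(1) insert.hyps(2) by (auto simp: max_def)
    then have "pairwise (\<lambda>s t. K * max (f s) (f t) < dist s t) (insert x S)"
      using S(2) False by (auto simp: pairwise_insert max.commute dist_commute not_le)
    moreover have "\<forall>t\<in>insert x T. \<exists>s\<in>insert x S. dist t s \<le> K * f t"
      using cover \<open>K \<ge> 0\<close> insert.prems by auto
    ultimately show ?thesis using S(1) by blast
  qed
qed

lemma separated_eq_if_near_common_point:
  fixes S :: "'a::metric_space set" and f :: "'a \<Rightarrow> real"
  assumes sep: "pairwise (\<lambda>s t. K * max (f s) (f t) < dist s t) S"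
    and "s \<in> S" "t \<in> S" "f s \<ge> 0" "f t \<ge> 0" "c \<ge> 0" "2 * c \<le> K"
    and near: "dist s x \<le> c * f s" "dist t x \<le> c * f t"
  shows "s = t"
proof (rule ccontr)
  assume "s \<noteq> t"
  have "c * f s \<le> c * max (f s) (f t)" "c * f t \<le> c * max (f s) (f t)"
    using \<open>c \<ge> 0\<close> by (simp_all add: mult_left_mono)
  moreover have "2 * c * max (f s) (f t) \<le> K * max (f s) (f t)"
    using assms(4,7) by (intro mult_right_mono) auto
  moreover have "dist s t \<le> dist s x + dist t x"
    by (rule dist_triangle2)
  moreover have "K * max (f s) (f t) < dist s t"
    using pairwiseD(1)[OF sep \<open>s \<in> S\<close> \<open>t \<in> S\<close> \<open>s \<noteq> t\<close>] .
  ultimately show False using near by linarith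
qed

lemma dist_set_le:
  assumes "finite W" "q \<in> W"
  shows "dist_set p W \<le> dist p q"
  unfolding dist_set_def using assms by (intro Min_le) auto

lemma dist_set_attained:
  assumes "finite W" "W \<noteq> {}"
  obtains q where "q \<in> W" "dist_set p W = dist p q"
proof -
  have "Min (dist p ` W) \<in> dist p ` W"
    using assms by (intro Min_in) auto
  then show thesis
    using that unfolding dist_set_def by auto
qed

lemma dist_set_nonneg:
  assumes "finite W" "W \<noteq> {}"
  shows "dist_set p W \<ge> 0"
proof -
  obtain q where "dist_set p W = dist p q"
    using dist_set_attained[OF assms] .
  then show ?thesis by simp
qed

lemma cost_nonneg:
  assumes "finite W" "W \<noteq> {}"
  shows "cost W P \<ge> 0"
  unfolding cost_def using dist_set_nonneg[OF assms] by (simp add: sum_nonneg)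

definition nearest :: "'a::metric_space set \<Rightarrow> 'a \<Rightarrow> 'a" where
  "nearest W p = arg_min_on (dist p) W"

lemma nearest_in:
  assumes "finite W" "W \<noteq> {}"
  shows "nearest W p \<in> W"
  unfolding nearest_def using arg_min_if_finite(1)[OF assms] .

lemma dist_set_eq_dist_nearest:
  assumes "finite W" "W \<noteq> {}"
  shows "dist_set p W = dist p (nearest W p)"
proof (rule antisym)
  show "dist_set p W \<le> dist p (nearest W p)"
    using dist_set_le[OF assms(1) nearest_in[OF assms]] .
  obtain q where "q \<in> W" "dist_set p W = dist p q"
    using dist_set_attained[OF assms] .
  then show "dist p (nearest W p) \<le> dist_set p W"
    unfolding nearest_def using arg_min_least[OF assms] by simp
qed

lemma cost_le_if_cover:
  fixes S U V P :: "'a::metric_space set"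
  assumes "finite U" "U \<noteq> {}" "finite V" "V \<noteq> {}" "finite S" "K \<ge> 0"
    and cover: "\<forall>u\<in>U. \<exists>s\<in>S. dist u s \<le> K * dist_set u V"
  shows "cost S P \<le> (K + 1) * (cost U P + cost V P)"
proof -
  have "dist_set p S \<le> (K + 1) * (dist_set p U + dist_set p V)" for p
  proof -
    obtain u where u: "u \<in> U" "dist_set p U = dist p u"
      using dist_set_attained[OF assms(1,2)] .
    obtain s where s: "s \<in> S" "dist u s \<le> K * dist_set u V"
      using cover u(1) by blast
    have "dist_set u V \<le> dist u (nearest V p)"
      using dist_set_le[OF assms(3) nearest_in[OF assms(3,4)]] .
    also have "\<dots> \<le> dist_set p U + dist_set p V"
      using dist_triangle3[of u "nearest V p" p] u(2) dist_set_eq_dist_nearest[OF assms(3,4)]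
      by (simp add: dist_commute)
    finally have "K * dist_set u V \<le> K * (dist_set p U + dist_set p V)"
      using \<open>K \<ge> 0\<close> by (rule mult_left_mono)
    moreover have "dist_set p S \<le> dist p u + dist u s"
      using dist_set_le[OF assms(5) s(1), of p] dist_triangle[of p s u] by linarith
    moreover have "dist_set p V \<ge> 0"
      using dist_set_nonneg[OF assms(3,4)] .
    ultimately show ?thesis
      using u(2) s(2) \<open>K \<ge> 0\<close> by (simp add: algebra_simps)
  qed
  then have "cost S P \<le> (\<Sum>p\<in>P. (K + 1) * (dist_set p U + dist_set p V))"
    unfolding cost_def by (rule sum_mono)
  also have "\<dots> = (K + 1) * (cost U P + cost V P)"
    unfolding cost_def by (simp only: sum.distrib[symmetric] sum_distrib_left)
  finally show ?thesis .
qed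

lemma dist_le_via_nearest:
  assumes "finite V" "V \<noteq> {}" "dist (nearest V s) x \<le> c * dist_set s V"
  shows "dist s x \<le> (c + 1) * dist_set s V"
  using dist_triangle[of s x "nearest V s"] dist_set_eq_dist_nearest[OF assms(1,2), of s] assms(3)
  by (simp add: algebra_simps)

lemma inj_on_nearest_if_separated:
  fixes S V :: "'a::metric_space set"
  assumes "finite V" "V \<noteq> {}" "2 \<le> K"
    and sep: "pairwise (\<lambda>s t. K * max (dist_set s V) (dist_set t V) < dist s t) S"
  shows "inj_on (nearest V) S"
proof (rule inj_onI)
  fix s t assume "s \<in> S" "t \<in> S" "nearest V s = nearest V t"
  then show "s = t"
    using dist_set_eq_dist_nearest[OF assms(1,2)] dist_set_nonneg[OF assms(1,2)] assms(3)
    by (intro separated_eq_if_near_common_point[OF sep, where c = 1 and x = "nearest V s"])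
       (auto simp: dist_commute)
qed

lemma not_well_separated_nearestE:
  assumes "finite V" "V \<noteq> {}" "s \<in> U" "\<not> well_separated U V s (nearest V s)"
  obtains u where "u \<in> U" "u \<noteq> s" "dist s u < gamma * dist_set s V"
    | v where "v \<in> V" "v \<noteq> nearest V s" "dist (nearest V s) v < gamma * dist_set s V"
  using assms nearest_in[OF assms(1,2), of s] dist_set_eq_dist_nearest[OF assms(1,2), of s]
  unfolding well_separated_def by (auto simp: not_le)

lemma card_well_separated_nearest_le:
  assumes "finite U" "finite V"
  shows "card {s\<in>S. well_separated U V s (nearest V s)} \<le> num_well_separated U V"
  unfolding num_well_separated_def
proof (rule card_inj_on_le)
  show "inj_on (\<lambda>s. (s, nearest V s)) {s\<in>S. well_separated U V s (nearest V s)}"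
    by (rule inj_onI) simp
  show "(\<lambda>s. (s, nearest V s)) ` {s\<in>S. well_separated U V s (nearest V s)}
          \<subseteq> {(u, v). u \<in> U \<and> v \<in> V \<and> well_separated U V u v}"
    by (auto simp: well_separated_def)
  show "finite {(u, v). u \<in> U \<and> v \<in> V \<and> well_separated U V u v}"
    by (rule finite_subset[of _ "U \<times> V"]) (use assms in auto)
qed

lemma card_not_well_separated_nearest_le:
  fixes S U V :: "'a::metric_space set"
  assumes "finite U" "finite V" "V \<noteq> {}" "S \<subseteq> U" "2 * (gamma + 1) \<le> K"
    and sep: "pairwise (\<lambda>s t. K * max (dist_set s V) (dist_set t V) < dist s t) S"
  shows "card {s\<in>S. \<not> well_separated U V s (nearest V s)} \<le> card (U - S) + card (V - nearest V ` S)"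
proof -
  have \<delta>: "dist_set s V \<ge> 0" for s
    using dist_set_nonneg[OF assms(2,3)] .
  have "gamma > 0" by (simp add: gamma_def)
  have eq_U: "s = t" if "s \<in> S" "t \<in> S"
    "dist s x \<le> gamma * dist_set s V" "dist t x \<le> gamma * dist_set t V" for s t x
    using that \<delta> \<open>gamma > 0\<close> assms(5)
    by (intro separated_eq_if_near_common_point[OF sep, where c = gamma and x = x]) auto
  have eq_V: "s = t" if "s \<in> S" "t \<in> S"
    "dist (nearest V s) x \<le> gamma * dist_set s V" "dist (nearest V t) x \<le> gamma * dist_set t V" for s t x
    using that \<delta> \<open>gamma > 0\<close> assms(5) dist_le_via_nearest[OF assms(2,3)]
    by (intro separated_eq_if_near_common_point[OF sep, where c = "gamma + 1" and x = x]) auto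
  define charged where "charged s y \<longleftrightarrow> (case y of
      Inl u \<Rightarrow> dist s u \<le> gamma * dist_set s V
    | Inr v \<Rightarrow> dist (nearest V s) v \<le> gamma * dist_set s V)" for s y
  have "card {s\<in>S. \<not> well_separated U V s (nearest V s)} \<le> card ((U - S) <+> (V - nearest V ` S))"
  proof (rule card_le_if_inj_on_rel[where r = charged])
    show "finite ((U - S) <+> (V - nearest V ` S))"
      using assms(1,2) by simp
    fix s assume "s \<in> {s\<in>S. \<not> well_separated U V s (nearest V s)}"
    then have s: "s \<in> S" "\<not> well_separated U V s (nearest V s)" by auto
    then show "\<exists>y. y \<in> (U - S) <+> (V - nearest V ` S) \<and> charged s y"
    proof (elim not_well_separated_nearestE[OF assms(2,3) subsetD[OF assms(4)]])
      fix u assume u: "u \<in> U" "u \<noteq> s" "dist s u < gamma * dist_set s V"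
      \<comment> \<open>Otherwise \<open>s\<close> and \<open>u\<close> would be two members of \<open>S\<close> near the point \<open>u\<close>.\<close>
      have "u \<notin> S"
        using eq_U[OF s(1) _ less_imp_le[OF u(3)], of u] u(2) \<delta> \<open>gamma > 0\<close> by auto
      then show ?thesis
        using u unfolding charged_def by (intro exI[of _ "Inl u"]) auto
    next
      fix v assume v: "v \<in> V" "v \<noteq> nearest V s" "dist (nearest V s) v < gamma * dist_set s V"
      have "v \<notin> nearest V ` S"
        using eq_V[OF s(1) _ less_imp_le[OF v(3)]] v(2) \<delta> \<open>gamma > 0\<close> by fastforce
      then show ?thesis
        using v unfolding charged_def by (intro exI[of _ "Inr v"]) auto
    qed
  next
    fix s t y assume "s \<in> {s\<in>S. \<not> well_separated U V s (nearest V s)}"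
      "t \<in> {s\<in>S. \<not> well_separated U V s (nearest V s)}" "charged s y" "charged t y"
    then show "s = t"
      unfolding charged_def using eq_U eq_V by (cases y) auto
  qed
  also have "\<dots> = card (U - S) + card (V - nearest V ` S)"
    using assms(1,2) by (simp add: card_Plus)
  finally show ?thesis .
qed

lemma three_card_separated_le:
  fixes S U V :: "'a::metric_space set"
  assumes "finite U" "finite V" "V \<noteq> {}" "S \<subseteq> U" "2 * (gamma + 1) \<le> K"
    and sep: "pairwise (\<lambda>s t. K * max (dist_set s V) (dist_set t V) < dist s t) S"
  shows "3 * card S \<le> num_well_separated U V + card U + card V"
proof -
  have "finite S"
    using assms(1,4) by (rule finite_subset[rotated])
  have "card S = card {s\<in>S. well_separated U V s (nearest V s)}
               + card {s\<in>S. \<not> well_separated U V s (nearest V s)}"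
    using \<open>finite S\<close> by (subst card_Un_disjoint[symmetric]) (auto intro: arg_cong[where f = card])
  moreover have "card (U - S) = card U - card S" "card S \<le> card U"
    using card_Diff_subset[OF \<open>finite S\<close> assms(4)] card_mono[OF assms(1,4)] by auto
  moreover have "card (V - nearest V ` S) = card V - card S" "card S \<le> card V"
  proof -
    have "nearest V ` S \<subseteq> V" "card (nearest V ` S) = card S"
      using nearest_in[OF assms(2,3)] inj_on_nearest_if_separated[OF assms(2,3) _ sep] assms(5)
      by (auto simp: gamma_def card_image)
    then show "card (V - nearest V ` S) = card V - card S" "card S \<le> card V"
      using assms(2) by (metis card_Diff_subset finite_subset, metis card_mono)
  qed
  ultimately show ?thesis
    using card_well_separated_nearest_le[OF assms(1,2), of S]
      card_not_well_separated_nearest_le[OF assms] by linarith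
qed

lemma int_le_sub_floor_quarter:
  fixes c k m r :: nat
  assumes "c \<le> k" "3 * c + m \<le> 3 * k + r"
  shows "int c \<le> int k - \<lfloor>(real m - real r) / 4\<rfloor>"
proof -
  have "real c + (real m - real r) / 4 \<le> real k"
    using assms by (cases "m \<le> r") (simp_all add: field_simps)
  then have "real c + real_of_int \<lfloor>(real m - real r) / 4\<rfloor> \<le> real k"
    using of_int_floor_le[of "(real m - real r) / 4"] by linarith
  then have "real_of_int (int c + \<lfloor>(real m - real r) / 4\<rfloor>) \<le> real_of_int (int k)"
    by simp
  then show ?thesis
    by linarith
qed

theorem lemma4p2:
  fixes P U V :: "'a::metric_space set" and k r m :: nat
  assumes "k \<ge> 1" and "m \<le> k"
    and "finite P"
    and "finite U" and "card U = k"
    and "finite V" and "card V = k + r"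
    and "num_well_separated U V = k - m"
  shows "\<exists>U'. U' \<subseteq> U \<and> U' \<noteq> {} \<and>
           int (card U') \<le> int k - \<lfloor>(real m - real r) / 4\<rfloor> \<and>
           cost U' P \<le> 6 * gamma * (cost U P + cost V P)"
proof -
  define K where "K = 2 * (gamma + 1)"
  have "U \<noteq> {}" "V \<noteq> {}"
    using assms by auto
  obtain S where S: "S \<subseteq> U" and sep: "pairwise (\<lambda>s t. K * max (dist_set s V) (dist_set t V) < dist s t) S"
    and cover: "\<forall>u\<in>U. \<exists>s\<in>S. dist u s \<le> K * dist_set u V"
    using exists_weighted_net[OF \<open>finite U\<close>, of K "\<lambda>u. dist_set u V"]
      dist_set_nonneg[OF \<open>finite V\<close> \<open>V \<noteq> {}\<close>] by (auto simp: K_def gamma_def)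
  have "finite S" "S \<noteq> {}"
    using S cover \<open>finite U\<close> \<open>U \<noteq> {}\<close> finite_subset by auto
  have "cost S P \<le> (K + 1) * (cost U P + cost V P)"
    using cost_le_if_cover[OF \<open>finite U\<close> \<open>U \<noteq> {}\<close> \<open>finite V\<close> \<open>V \<noteq> {}\<close> \<open>finite S\<close> _ cover]
    by (simp add: K_def gamma_def)
  also have "\<dots> \<le> 6 * gamma * (cost U P + cost V P)"
    using cost_nonneg[OF \<open>finite U\<close> \<open>U \<noteq> {}\<close>] cost_nonneg[OF \<open>finite V\<close> \<open>V \<noteq> {}\<close>]
    by (intro mult_right_mono) (auto simp: K_def gamma_def)
  finally have cost: "cost S P \<le> 6 * gamma * (cost U P + cost V P)" .
  have "3 * card S \<le> (k - m) + k + (k + r)"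
    using three_card_separated_le[OF \<open>finite U\<close> \<open>finite V\<close> \<open>V \<noteq> {}\<close> S _ sep] assms
    by (simp add: K_def)
  moreover have "card S \<le> k"
    using card_mono[OF \<open>finite U\<close> S] assms by simp
  ultimately have "int (card S) \<le> int k - \<lfloor>(real m - real r) / 4\<rfloor>"
    using \<open>m \<le> k\<close> by (intro int_le_sub_floor_quarter) auto
  then show ?thesis
    using S \<open>S \<noteq> {}\<close> cost by blast
qed

end
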